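(* Fix finite nonempty sets $A$ and $\Omega$, a prior $\mu_0$ on $\Omega$ with $\mu_0(\omega)>0$ for all $\omega$, and a finite message set $M$ with $|M|>\max\{|\Omega|,|A|\}$. There is a set of environments of Lebesgue measure one in $[0,1]^{2|A||\Omega|}$ such that, for every environment in this set: if cheap-talk Sender values randomization, then committed Sender values randomization.
   Context: An environment is a pair $(u_S,u_R)$ of functions $A\times\Omega\to[0,1]$, identified with a point of $[0,1]^{2|A||\Omega|}$. A messaging strategy is $\sigma:\Omega\to\Delta M$ and an action strategy is $\rho:M\to\Delta A$. For $i\in\{S,R\}$, $U_i(\sigma,\rho)=\sum_{\omega,m,a}\mu_0(\omega)\sigma(m|\omega)\rho(a|m)u_i(a,\omega)$. A profile $(\sigma,\rho)$ is S-BR if $\sigma\in\arg\max_{\sigma'}U_S(\sigma',\rho)$, and R-BR if $\rho\in\arg\max_{\rho'}U_R(\sigma,\rho')$. A persuasion profile is an R-BR profile; the persuasion payoff is the maximum of $U_S$ over persuasion profiles. A cheap-talk equilibrium is an S-BR and R-BR profile; the cheap-talk payoff is the maximum of $U_S$ over cheap-talk equilibria. $\sigma$ is partitional if for every $\omega$ some $m$ has $\sigma(m|\omega)=1$. The partitional persuasion payoff (resp. partitional cheap-talk payoff) is the maximum of $U_S$ over persuasion profiles (resp. cheap-talk equilibria) with partitional $\sigma$. Committed Sender values randomization if the persuasion payoff strictly exceeds the partitional persuasion payoff. Cheap-talk Sender values randomization if the cheap-talk payoff strictly exceeds the partitional cheap-talk payoff. *)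

theory Defs
  imports "HOL-Analysis.Analysis"
begin

definition is_dist :: "('x::finite \<Rightarrow> real) \<Rightarrow> bool" where
  "is_dist f \<longleftrightarrow> (\<forall>x. 0 \<le> f x) \<and> (\<Sum>x\<in>UNIV. f x) = 1"

definition msg_strat :: "('w::finite \<Rightarrow> 'm::finite \<Rightarrow> real) \<Rightarrow> bool" where
  "msg_strat \<sigma> \<longleftrightarrow> (\<forall>w. is_dist (\<sigma> w))"

definition act_strat :: "('m::finite \<Rightarrow> 'a::finite \<Rightarrow> real) \<Rightarrow> bool" where
  "act_strat \<rho> \<longleftrightarrow> (\<forall>m. is_dist (\<rho> m))"

definition U :: "('w::finite \<Rightarrow> real) \<Rightarrow> ('a::finite \<Rightarrow> 'w \<Rightarrow> real)
    \<Rightarrow> ('w \<Rightarrow> 'm::finite \<Rightarrow> real) \<Rightarrow> ('m \<Rightarrow> 'a \<Rightarrow> real) \<Rightarrow> real" where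
  "U \<mu> u \<sigma> \<rho> = (\<Sum>w\<in>UNIV. \<Sum>m\<in>UNIV. \<Sum>a\<in>UNIV. \<mu> w * \<sigma> w m * \<rho> m a * u a w)"

definition S_BR :: "('w::finite \<Rightarrow> real) \<Rightarrow> ('a::finite \<Rightarrow> 'w \<Rightarrow> real)
    \<Rightarrow> ('w \<Rightarrow> 'm::finite \<Rightarrow> real) \<Rightarrow> ('m \<Rightarrow> 'a \<Rightarrow> real) \<Rightarrow> bool" where
  "S_BR \<mu> uS \<sigma> \<rho> \<longleftrightarrow> (\<forall>\<sigma>'. msg_strat \<sigma>' \<longrightarrow> U \<mu> uS \<sigma>' \<rho> \<le> U \<mu> uS \<sigma> \<rho>)"

definition R_BR :: "('w::finite \<Rightarrow> real) \<Rightarrow> ('a::finite \<Rightarrow> 'w \<Rightarrow> real)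
    \<Rightarrow> ('w \<Rightarrow> 'm::finite \<Rightarrow> real) \<Rightarrow> ('m \<Rightarrow> 'a \<Rightarrow> real) \<Rightarrow> bool" where
  "R_BR \<mu> uR \<sigma> \<rho> \<longleftrightarrow> (\<forall>\<rho>'. act_strat \<rho>' \<longrightarrow> U \<mu> uR \<sigma> \<rho>' \<le> U \<mu> uR \<sigma> \<rho>)"

definition partitional :: "('w::finite \<Rightarrow> 'm::finite \<Rightarrow> real) \<Rightarrow> bool" where
  "partitional \<sigma> \<longleftrightarrow> (\<forall>w. \<exists>m. \<sigma> w m = 1)"

definition persuasion_profile ::
  "('w::finite \<Rightarrow> real) \<Rightarrow> ('a::finite \<Rightarrow> 'w \<Rightarrow> real)
    \<Rightarrow> ('w \<Rightarrow> 'm::finite \<Rightarrow> real) \<Rightarrow> ('m \<Rightarrow> 'a \<Rightarrow> real) \<Rightarrow> bool" where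
  "persuasion_profile \<mu> uR \<sigma> \<rho> \<longleftrightarrow> msg_strat \<sigma> \<and> act_strat \<rho> \<and> R_BR \<mu> uR \<sigma> \<rho>"

definition cheap_talk_eq ::
  "('w::finite \<Rightarrow> real) \<Rightarrow> ('a::finite \<Rightarrow> 'w \<Rightarrow> real) \<Rightarrow> ('a \<Rightarrow> 'w \<Rightarrow> real)
    \<Rightarrow> ('w \<Rightarrow> 'm::finite \<Rightarrow> real) \<Rightarrow> ('m \<Rightarrow> 'a \<Rightarrow> real) \<Rightarrow> bool" where
  "cheap_talk_eq \<mu> uS uR \<sigma> \<rho> \<longleftrightarrow>
     msg_strat \<sigma> \<and> act_strat \<rho> \<and> S_BR \<mu> uS \<sigma> \<rho> \<and> R_BR \<mu> uR \<sigma> \<rho>"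

text \<open>Payoffs: the maximum (written as Sup; the maximum is attained) of U_S.\<close>
definition persuasion_payoff ::
  "'m::finite itself \<Rightarrow> ('w::finite \<Rightarrow> real) \<Rightarrow> ('a::finite \<Rightarrow> 'w \<Rightarrow> real) \<Rightarrow> ('a \<Rightarrow> 'w \<Rightarrow> real) \<Rightarrow> real" where
  "persuasion_payoff _ \<mu> uS uR =
     Sup {U \<mu> uS \<sigma> \<rho> | (\<sigma> :: 'w \<Rightarrow> 'm \<Rightarrow> real) \<rho>. persuasion_profile \<mu> uR \<sigma> \<rho>}"

definition partitional_persuasion_payoff ::
  "'m::finite itself \<Rightarrow> ('w::finite \<Rightarrow> real) \<Rightarrow> ('a::finite \<Rightarrow> 'w \<Rightarrow> real) \<Rightarrow> ('a \<Rightarrow> 'w \<Rightarrow> real) \<Rightarrow> real" where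
  "partitional_persuasion_payoff _ \<mu> uS uR =
     Sup {U \<mu> uS \<sigma> \<rho> | (\<sigma> :: 'w \<Rightarrow> 'm \<Rightarrow> real) \<rho>.
            persuasion_profile \<mu> uR \<sigma> \<rho> \<and> partitional \<sigma>}"

definition cheap_talk_payoff ::
  "'m::finite itself \<Rightarrow> ('w::finite \<Rightarrow> real) \<Rightarrow> ('a::finite \<Rightarrow> 'w \<Rightarrow> real) \<Rightarrow> ('a \<Rightarrow> 'w \<Rightarrow> real) \<Rightarrow> real" where
  "cheap_talk_payoff _ \<mu> uS uR =
     Sup {U \<mu> uS \<sigma> \<rho> | (\<sigma> :: 'w \<Rightarrow> 'm \<Rightarrow> real) \<rho>. cheap_talk_eq \<mu> uS uR \<sigma> \<rho>}"

definition partitional_cheap_talk_payoff ::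
  "'m::finite itself \<Rightarrow> ('w::finite \<Rightarrow> real) \<Rightarrow> ('a::finite \<Rightarrow> 'w \<Rightarrow> real) \<Rightarrow> ('a \<Rightarrow> 'w \<Rightarrow> real) \<Rightarrow> real" where
  "partitional_cheap_talk_payoff _ \<mu> uS uR =
     Sup {U \<mu> uS \<sigma> \<rho> | (\<sigma> :: 'w \<Rightarrow> 'm \<Rightarrow> real) \<rho>.
            cheap_talk_eq \<mu> uS uR \<sigma> \<rho> \<and> partitional \<sigma>}"

definition committed_values_randomization where
  "committed_values_randomization M \<mu> uS uR \<longleftrightarrow>
     persuasion_payoff M \<mu> uS uR > partitional_persuasion_payoff M \<mu> uS uR"

definition cheap_talk_values_randomization where
  "cheap_talk_values_randomization M \<mu> uS uR \<longleftrightarrow>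
     cheap_talk_payoff M \<mu> uS uR > partitional_cheap_talk_payoff M \<mu> uS uR"

text \<open>Environments as points of [0,1]^(2|A||Omega|), coordinates indexed by
  bool x A x Omega: True = Sender, False = Receiver.\<close>
definition env_uS :: "real ^ (bool \<times> 'a::finite \<times> 'w::finite) \<Rightarrow> 'a \<Rightarrow> 'w \<Rightarrow> real" where
  "env_uS x a w = x $ (True, a, w)"

definition env_uR :: "real ^ (bool \<times> 'a::finite \<times> 'w::finite) \<Rightarrow> 'a \<Rightarrow> 'w \<Rightarrow> real" where
  "env_uR x a w = x $ (False, a, w)"

definition unit_cube :: "(real ^ 'n::finite) set" where
  "unit_cube = {x. \<forall>i. 0 \<le> x $ i \<and> x $ i \<le> 1}"

end

theory Submission
  imports Defs
begin

text \<open>Call the Receiver generic if she is never indifferent between two actions after a message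
  sent exactly in the states of some nonempty set C. This fails only on finitely many hyperplanes
  \<Sum>w\<in>C. \<mu> w * (uR a w - uR a' w) = 0, a null set of environments.

  For a generic Receiver, the reply to a partitional strategy f is unique on the messages f uses,
  so the partitional persuasion payoff is attained by some f together with its pure best reply \<beta>.
  If committed Sender does not value randomization, this profile is optimal among all persuasion
  profiles, and then it is also a cheap-talk equilibrium: if in some state w the Sender preferred
  the action induced by another used message, shifting a small weight e from f w to that message
  would keep \<beta> a best reply (it is strict there) and raise the Sender's payoff. So the
  partitional cheap-talk payoff is at least the persuasion payoff, which bounds the cheap-talk
  payoff from above.\<close>

lemma is_dist_sum_le:
  assumes "is_dist p" and "\<And>x. g x \<le> c"
  shows "(\<Sum>x\<in>UNIV. p x * g x) \<le> c"
proof -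
  have "(\<Sum>x\<in>UNIV. p x * g x) \<le> (\<Sum>x\<in>UNIV. p x * c)"
    using assms by (intro sum_mono mult_left_mono) (auto simp: is_dist_def)
  also have "\<dots> = c"
    using assms(1) by (simp add: is_dist_def flip: sum_distrib_right)
  finally show ?thesis .
qed

lemma is_dist_sum_concentrated:
  assumes "is_dist p" and "\<And>x. p x \<noteq> 0 \<Longrightarrow> x = b"
  shows "(\<Sum>x\<in>UNIV. p x * g x) = g b"
proof -
  have "(\<Sum>x\<in>UNIV. p x * g x) = (\<Sum>x\<in>UNIV. p x * g b)"
    by (rule sum.cong) (use assms(2) in fastforce)+
  also have "\<dots> = g b"
    using assms(1) by (simp add: is_dist_def flip: sum_distrib_right)
  finally show ?thesis .
qed

lemma is_dist_eq_1:
  assumes "is_dist p" and "p b = 1"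
  shows "p x = (if x = b then 1 else 0)"
proof -
  have "(\<Sum>y\<in>UNIV. p y) = p b + (\<Sum>y\<in>UNIV - {b}. p y)"
    by (simp add: sum.remove)
  then have "(\<Sum>y\<in>UNIV - {b}. p y) = 0"
    using assms by (simp add: is_dist_def)
  then have "\<forall>y\<in>UNIV - {b}. p y = 0"
    using assms(1) by (subst (asm) sum_nonneg_eq_0_iff) (auto simp: is_dist_def)
  then show ?thesis
    using assms(2) by auto
qed

definition pure_strat :: "('x \<Rightarrow> 'y) \<Rightarrow> 'x \<Rightarrow> 'y \<Rightarrow> real" where
  "pure_strat g x y = (if y = g x then 1 else 0)"

lemma is_dist_pure_strat: "is_dist (pure_strat g x :: 'y::finite \<Rightarrow> real)"
  by (simp add: is_dist_def pure_strat_def sum.delta)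

lemma msg_strat_pure_strat: "msg_strat (pure_strat f)"
  by (simp add: msg_strat_def is_dist_pure_strat)

lemma act_strat_pure_strat: "act_strat (pure_strat \<beta>)"
  by (simp add: act_strat_def is_dist_pure_strat)

lemma partitional_pure_strat: "partitional (pure_strat f)"
  by (auto simp: partitional_def pure_strat_def)

lemma sum_pure_strat:
  fixes g :: "'x \<Rightarrow> 'y::finite"
  shows "(\<Sum>y\<in>UNIV. pure_strat g x y * h y) = h (g x)"
proof -
  have "(\<Sum>y\<in>UNIV. pure_strat g x y * h y) = (\<Sum>y\<in>UNIV. if y = g x then h y else 0)"
    by (rule sum.cong) (auto simp: pure_strat_def)
  also have "\<dots> = h (g x)"
    by (simp add: sum.delta)
  finally show ?thesis .
qed

lemma partitional_imp_pure_strat: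
  assumes "msg_strat \<sigma>" and "partitional \<sigma>"
  obtains f where "\<sigma> = pure_strat f"
proof -
  from assms(2) obtain f where f: "\<And>w. \<sigma> w (f w) = 1"
    unfolding partitional_def by metis
  have "\<sigma> = pure_strat f"
    using assms(1) is_dist_eq_1[of "\<sigma> _", OF _ f] by (intro ext) (simp add: msg_strat_def pure_strat_def)
  then show thesis
    by (rule that)
qed

text \<open>The Receiver's payoff from action a after message m, weighted by the probability of m;
  the weight does not affect her best replies, so no posterior needs to be formed.\<close>
definition message_payoff ::
  "('w::finite \<Rightarrow> real) \<Rightarrow> ('a \<Rightarrow> 'w \<Rightarrow> real) \<Rightarrow> ('w \<Rightarrow> 'm \<Rightarrow> real) \<Rightarrow> 'm \<Rightarrow> 'a \<Rightarrow> real" where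
  "message_payoff \<mu> u \<sigma> m a = (\<Sum>w\<in>UNIV. \<mu> w * \<sigma> w m * u a w)"

lemma U_eq_sum_message_payoff:
  "U \<mu> u \<sigma> \<rho> = (\<Sum>m\<in>UNIV. \<Sum>a\<in>UNIV. \<rho> m a * message_payoff \<mu> u \<sigma> m a)"
proof -
  have "U \<mu> u \<sigma> \<rho> = (\<Sum>m\<in>UNIV. \<Sum>a\<in>UNIV. \<Sum>w\<in>UNIV. \<mu> w * \<sigma> w m * \<rho> m a * u a w)"
    unfolding U_def by (subst sum.swap) (rule sum.cong[OF refl], rule sum.swap)
  then show ?thesis
    by (simp add: message_payoff_def sum_distrib_left mult_ac)
qed

lemma U_eq_sum_states:
  "U \<mu> u \<sigma> \<rho> = (\<Sum>w\<in>UNIV. \<mu> w * (\<Sum>m\<in>UNIV. \<sigma> w m * (\<Sum>a\<in>UNIV. \<rho> m a * u a w)))"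
  by (simp add: U_def sum_distrib_left mult_ac)

lemma U_pure_act:
  "U \<mu> u \<sigma> (pure_strat \<beta>) = (\<Sum>w\<in>UNIV. \<mu> w * (\<Sum>m\<in>UNIV. \<sigma> w m * u (\<beta> m) w))"
  by (simp add: U_eq_sum_states sum_pure_strat)

lemma U_pure_pure:
  "U \<mu> u (pure_strat f) (pure_strat \<beta>) = (\<Sum>w\<in>UNIV. \<mu> w * u (\<beta> (f w)) w)"
  by (simp add: U_pure_act sum_pure_strat)

lemma message_payoff_pure:
  "message_payoff \<mu> u (pure_strat f) m a = (\<Sum>w | f w = m. \<mu> w * u a w)"
proof -
  have "message_payoff \<mu> u (pure_strat f) m a = (\<Sum>w\<in>UNIV. if f w = m then \<mu> w * u a w else 0)"
    unfolding message_payoff_def by (rule sum.cong) (auto simp: pure_strat_def)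
  then show ?thesis
    by (simp add: sum.If_cases)
qed

definition mix :: "real \<Rightarrow> ('x \<Rightarrow> 'y \<Rightarrow> real) \<Rightarrow> ('x \<Rightarrow> 'y \<Rightarrow> real) \<Rightarrow> 'x \<Rightarrow> 'y \<Rightarrow> real" where
  "mix e \<sigma> \<tau> x y = (1 - e) * \<sigma> x y + e * \<tau> x y"

lemma msg_strat_mix:
  assumes "msg_strat \<sigma>" and "msg_strat \<tau>" and "0 \<le> e" and "e \<le> 1"
  shows "msg_strat (mix e \<sigma> \<tau>)"
  unfolding msg_strat_def is_dist_def
proof (intro allI conjI)
  fix w m
  show "0 \<le> mix e \<sigma> \<tau> w m"
    using assms unfolding mix_def msg_strat_def is_dist_def by (intro add_nonneg_nonneg mult_nonneg_nonneg) auto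
next
  fix w
  have "(\<Sum>m\<in>UNIV. mix e \<sigma> \<tau> w m) = (1 - e) * (\<Sum>m\<in>UNIV. \<sigma> w m) + e * (\<Sum>m\<in>UNIV. \<tau> w m)"
    by (simp add: mix_def sum.distrib sum_distrib_left)
  then show "(\<Sum>m\<in>UNIV. mix e \<sigma> \<tau> w m) = 1"
    using assms by (simp add: msg_strat_def is_dist_def)
qed

lemma U_mix: "U \<mu> u (mix e \<sigma> \<tau>) \<rho> = (1 - e) * U \<mu> u \<sigma> \<rho> + e * U \<mu> u \<tau> \<rho>"
proof -
  have "\<mu> w * mix e \<sigma> \<tau> w m * \<rho> m a * u a w
      = (1 - e) * (\<mu> w * \<sigma> w m * \<rho> m a * u a w) + e * (\<mu> w * \<tau> w m * \<rho> m a * u a w)" for w m a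
    by (simp add: mix_def algebra_simps)
  then show ?thesis
    by (simp add: U_def sum.distrib sum_distrib_left)
qed

lemma message_payoff_mix:
  "message_payoff \<mu> u (mix e \<sigma> \<tau>) m a
     = (1 - e) * message_payoff \<mu> u \<sigma> m a + e * message_payoff \<mu> u \<tau> m a"
proof -
  have "\<mu> w * mix e \<sigma> \<tau> w m * u a w
      = (1 - e) * (\<mu> w * \<sigma> w m * u a w) + e * (\<mu> w * \<tau> w m * u a w)" for w
    by (simp add: mix_def algebra_simps)
  then show ?thesis
    by (simp add: message_payoff_def sum.distrib sum_distrib_left)
qed

definition best_value ::
  "('w::finite \<Rightarrow> real) \<Rightarrow> ('a::finite \<Rightarrow> 'w \<Rightarrow> real) \<Rightarrow> ('w \<Rightarrow> 'm \<Rightarrow> real) \<Rightarrow> 'm \<Rightarrow> real" where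
  "best_value \<mu> u \<sigma> m = Max (range (message_payoff \<mu> u \<sigma> m))"

lemma message_payoff_le_best_value: "message_payoff \<mu> u \<sigma> m a \<le> best_value \<mu> u \<sigma> m"
  by (simp add: best_value_def)

definition best_action ::
  "('w::finite \<Rightarrow> real) \<Rightarrow> ('a::finite \<Rightarrow> 'w \<Rightarrow> real) \<Rightarrow> ('w \<Rightarrow> 'm \<Rightarrow> real) \<Rightarrow> 'm \<Rightarrow> 'a" where
  "best_action \<mu> u \<sigma> m = (SOME a. message_payoff \<mu> u \<sigma> m a = best_value \<mu> u \<sigma> m)"

lemma message_payoff_best_action:
  "message_payoff \<mu> u \<sigma> m (best_action \<mu> u \<sigma> m) = best_value \<mu> u \<sigma> m"
proof -
  have "best_value \<mu> u \<sigma> m \<in> range (message_payoff \<mu> u \<sigma> m)"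
    unfolding best_value_def by (rule Max_in) simp_all
  then have "\<exists>a. message_payoff \<mu> u \<sigma> m a = best_value \<mu> u \<sigma> m"
    by (metis imageE)
  then show ?thesis
    unfolding best_action_def by (rule someI_ex)
qed

lemma U_le_sum_best_value:
  assumes "act_strat \<rho>"
  shows "U \<mu> u \<sigma> \<rho> \<le> (\<Sum>m\<in>UNIV. best_value \<mu> u \<sigma> m)"
  unfolding U_eq_sum_message_payoff
  using assms by (intro sum_mono is_dist_sum_le message_payoff_le_best_value) (auto simp: act_strat_def)

lemma U_best_action:
  "U \<mu> u \<sigma> (pure_strat (best_action \<mu> u \<sigma>)) = (\<Sum>m\<in>UNIV. best_value \<mu> u \<sigma> m)"
  by (simp add: U_eq_sum_message_payoff sum_pure_strat message_payoff_best_action)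

lemma R_BR_iff_sum_best_value:
  assumes "act_strat \<rho>"
  shows "R_BR \<mu> u \<sigma> \<rho> \<longleftrightarrow> U \<mu> u \<sigma> \<rho> = (\<Sum>m\<in>UNIV. best_value \<mu> u \<sigma> m)"
proof
  assume "R_BR \<mu> u \<sigma> \<rho>"
  then have "(\<Sum>m\<in>UNIV. best_value \<mu> u \<sigma> m) \<le> U \<mu> u \<sigma> \<rho>"
    unfolding R_BR_def U_best_action[symmetric] by (simp add: act_strat_pure_strat)
  then show "U \<mu> u \<sigma> \<rho> = (\<Sum>m\<in>UNIV. best_value \<mu> u \<sigma> m)"
    using U_le_sum_best_value[OF assms, of \<mu> u \<sigma>] by linarith
next
  assume "U \<mu> u \<sigma> \<rho> = (\<Sum>m\<in>UNIV. best_value \<mu> u \<sigma> m)"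
  then show "R_BR \<mu> u \<sigma> \<rho>"
    by (simp add: R_BR_def U_le_sum_best_value)
qed

lemma R_BR_pure_strat:
  assumes "\<forall>m a. message_payoff \<mu> u \<sigma> m a \<le> message_payoff \<mu> u \<sigma> m (\<beta> m)"
  shows "R_BR \<mu> u \<sigma> (pure_strat \<beta>)"
proof -
  have "message_payoff \<mu> u \<sigma> m (\<beta> m) = best_value \<mu> u \<sigma> m" for m
    using assms by (intro antisym message_payoff_le_best_value) (auto simp: best_value_def)
  then show ?thesis
    by (simp add: R_BR_iff_sum_best_value act_strat_pure_strat U_eq_sum_message_payoff sum_pure_strat)
qed

text \<open>A best reply loses nothing at any message, so it can only use actions that are optimal there.\<close>
lemma R_BR_support:
  assumes act: "act_strat \<rho>" and br: "R_BR \<mu> u \<sigma> \<rho>" and "\<rho> m a \<noteq> 0"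
  shows "message_payoff \<mu> u \<sigma> m a = best_value \<mu> u \<sigma> m"
proof -
  let ?loss = "\<lambda>m a. \<rho> m a * (best_value \<mu> u \<sigma> m - message_payoff \<mu> u \<sigma> m a)"
  have dist: "is_dist (\<rho> m)" for m
    using act by (simp add: act_strat_def)
  have loss_nonneg: "0 \<le> ?loss m a" for m a
    using dist by (simp add: is_dist_def message_payoff_le_best_value)
  have "(\<Sum>m\<in>UNIV. \<Sum>a\<in>UNIV. ?loss m a)
      = (\<Sum>m\<in>UNIV. best_value \<mu> u \<sigma> m) - U \<mu> u \<sigma> \<rho>"
    using dist by (simp add: U_eq_sum_message_payoff right_diff_distrib sum_subtractf is_dist_def
        flip: sum_distrib_right)
  also have "\<dots> = 0"
    using act br by (simp add: R_BR_iff_sum_best_value)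
  finally have "(\<Sum>a\<in>UNIV. ?loss m a) = 0"
    using loss_nonneg by (simp add: sum_nonneg sum_nonneg_eq_0_iff)
  then have "?loss m a = 0"
    using loss_nonneg by (simp add: sum_nonneg_eq_0_iff)
  then show ?thesis
    using \<open>\<rho> m a \<noteq> 0\<close> by simp
qed

definition receiver_generic :: "('w::finite \<Rightarrow> real) \<Rightarrow> ('a \<Rightarrow> 'w \<Rightarrow> real) \<Rightarrow> bool" where
  "receiver_generic \<mu> u \<longleftrightarrow>
     (\<forall>C a a'. C \<noteq> {} \<longrightarrow> a \<noteq> a' \<longrightarrow> (\<Sum>w\<in>C. \<mu> w * u a w) \<noteq> (\<Sum>w\<in>C. \<mu> w * u a' w))"

lemma generic_unique_action:
  assumes "receiver_generic \<mu> u" and "m \<in> range f"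
    and "message_payoff \<mu> u (pure_strat f) m a = message_payoff \<mu> u (pure_strat f) m a'"
  shows "a = a'"
proof (rule ccontr)
  assume "a \<noteq> a'"
  moreover have "{w. f w = m} \<noteq> {}"
    using assms(2) by auto
  ultimately have "(\<Sum>w | f w = m. \<mu> w * u a w) \<noteq> (\<Sum>w | f w = m. \<mu> w * u a' w)"
    using assms(1) unfolding receiver_generic_def by (elim allE impE) assumption+
  then show False
    using assms(3) by (simp add: message_payoff_pure)
qed

lemma generic_persuasion_value:
  assumes gen: "receiver_generic \<mu> uR" and pp: "persuasion_profile \<mu> uR (pure_strat f) \<rho>"
    and br: "\<forall>m a. message_payoff \<mu> uR (pure_strat f) m a \<le> message_payoff \<mu> uR (pure_strat f) m (\<beta> m)"
  shows "U \<mu> uS (pure_strat f) \<rho> = U \<mu> uS (pure_strat f) (pure_strat \<beta>)"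
proof -
  have act: "act_strat \<rho>" and rbr: "R_BR \<mu> uR (pure_strat f) \<rho>"
    using pp by (auto simp: persuasion_profile_def)
  have "a = \<beta> (f w)" if "\<rho> (f w) a \<noteq> 0" for w a
  proof (rule generic_unique_action[OF gen])
    show "message_payoff \<mu> uR (pure_strat f) (f w) a = message_payoff \<mu> uR (pure_strat f) (f w) (\<beta> (f w))"
      using R_BR_support[OF act rbr that] br[rule_format, of "f w" a]
        message_payoff_le_best_value[of \<mu> uR "pure_strat f" "f w" "\<beta> (f w)"] by linarith
  qed simp
  then have "(\<Sum>a\<in>UNIV. \<rho> (f w) a * uS a w) = uS (\<beta> (f w)) w" for w
    using act by (intro is_dist_sum_concentrated) (auto simp: act_strat_def)
  then show ?thesis
    by (simp add: U_eq_sum_states sum_pure_strat U_pure_pure)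
qed

text \<open>Messages outside the range of f carry no information; they are answered like the message
  of an arbitrary state, so that every action of the reply is induced by some state.\<close>
definition partition_response ::
  "('w::finite \<Rightarrow> real) \<Rightarrow> ('a::finite \<Rightarrow> 'w \<Rightarrow> real) \<Rightarrow> ('w \<Rightarrow> 'm) \<Rightarrow> 'm \<Rightarrow> 'a" where
  "partition_response \<mu> u f m = best_action \<mu> u (pure_strat f) (if m \<in> range f then m else f undefined)"

lemma partition_response_best:
  "message_payoff \<mu> u (pure_strat f) m a \<le> message_payoff \<mu> u (pure_strat f) m (partition_response \<mu> u f m)"
proof (cases "m \<in> range f")
  case True
  then show ?thesis
    by (simp add: partition_response_def message_payoff_best_action message_payoff_le_best_value)
next
  case False
  then have "{w. f w = m} = {}"
    by auto
  then show ?thesis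
    by (simp add: message_payoff_pure)
qed

lemma partition_response_used: "\<exists>w. partition_response \<mu> u f m = partition_response \<mu> u f (f w)"
  by (cases "m \<in> range f") (auto simp: partition_response_def)

lemma eventually_mix_le:
  fixes x0 x1 y0 y1 :: real
  assumes "x0 < y0 \<or> x0 \<le> y0 \<and> x1 \<le> y1"
  shows "\<forall>\<^sub>F e in at_right 0. (1 - e) * x0 + e * x1 \<le> (1 - e) * y0 + e * y1"
  using assms
proof
  assume "x0 < y0"
  have "((\<lambda>e. (1 - e) * (y0 - x0) + e * (y1 - x1)) \<longlongrightarrow> (1 - 0) * (y0 - x0) + 0 * (y1 - x1)) (at_right 0)"
    by (intro tendsto_intros)
  then have "\<forall>\<^sub>F e in at_right 0. 0 < (1 - e) * (y0 - x0) + e * (y1 - x1)"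
    using \<open>x0 < y0\<close> by (intro order_tendstoD(1)) auto
  then show ?thesis
    by eventually_elim (simp add: algebra_simps)
next
  assume le: "x0 \<le> y0 \<and> x1 \<le> y1"
  have "\<forall>\<^sub>F e in at_right 0. 0 < e \<and> e < (1::real)"
    unfolding eventually_at_right_field by (intro exI[of _ 1]) auto
  then show ?thesis
    by eventually_elim (use le in \<open>intro add_mono mult_left_mono, auto\<close>)
qed

lemma eventually_R_BR_mix:
  fixes f g :: "'w::finite \<Rightarrow> 'm::finite"
  assumes gen: "receiver_generic \<mu> uR"
    and br: "\<forall>m a. message_payoff \<mu> uR (pure_strat f) m a \<le> message_payoff \<mu> uR (pure_strat f) m (\<beta> m)"
    and "range g \<subseteq> range f"
  shows "\<forall>\<^sub>F e in at_right 0. R_BR \<mu> uR (mix e (pure_strat f) (pure_strat g)) (pure_strat \<beta>)"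
proof -
  let ?G0 = "message_payoff \<mu> uR (pure_strat f)" and ?G1 = "message_payoff \<mu> uR (pure_strat g)"
  have "?G0 m a < ?G0 m (\<beta> m) \<or> ?G0 m a \<le> ?G0 m (\<beta> m) \<and> ?G1 m a \<le> ?G1 m (\<beta> m)" for m a
  proof (cases "m \<in> range f")
    case True
    show ?thesis
    proof (cases "a = \<beta> m")
      case False
      then have "?G0 m a \<noteq> ?G0 m (\<beta> m)"
        using generic_unique_action[OF gen True, of a "\<beta> m"] by blast
      then show ?thesis
        using br[rule_format, of m a] by linarith
    qed simp
  next
    case False
    then have "{v. f v = m} = {}" and "{v. g v = m} = {}"
      using \<open>range g \<subseteq> range f\<close> by auto
    then show ?thesis
      by (simp add: message_payoff_pure)
  qed
  then have "\<forall>\<^sub>F e in at_right 0. \<forall>m a. message_payoff \<mu> uR (mix e (pure_strat f) (pure_strat g)) m a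
                               \<le> message_payoff \<mu> uR (mix e (pure_strat f) (pure_strat g)) m (\<beta> m)"
    unfolding message_payoff_mix by (intro eventually_all_finite eventually_mix_le)
  then show ?thesis
    by (rule eventually_mono) (rule R_BR_pure_strat)
qed

lemma profitable_persuasion_deviation:
  fixes f :: "'w::finite \<Rightarrow> 'm::finite"
  assumes pos: "\<forall>w. 0 < \<mu> w" and gen: "receiver_generic \<mu> uR"
    and br: "\<forall>m a. message_payoff \<mu> uR (pure_strat f) m a \<le> message_payoff \<mu> uR (pure_strat f) m (\<beta> m)"
    and gain: "uS (\<beta> (f w)) w < uS (\<beta> (f w')) w"
  shows "\<exists>(\<sigma> :: 'w \<Rightarrow> 'm \<Rightarrow> real) \<rho>. persuasion_profile \<mu> uR \<sigma> \<rho> \<and>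
           U \<mu> uS (pure_strat f) (pure_strat \<beta>) < U \<mu> uS \<sigma> \<rho>"
proof -
  define g where "g = f(w := f w')"
  have "\<forall>\<^sub>F e in at_right 0. R_BR \<mu> uR (mix e (pure_strat f) (pure_strat g)) (pure_strat \<beta>)"
    by (rule eventually_R_BR_mix[OF gen br]) (auto simp: g_def)
  moreover have "\<forall>\<^sub>F e in at_right 0. 0 < e \<and> e < (1::real)"
    unfolding eventually_at_right_field by (intro exI[of _ 1]) auto
  ultimately obtain e where e: "0 < e" "e < 1"
    and "R_BR \<mu> uR (mix e (pure_strat f) (pure_strat g)) (pure_strat \<beta>)"
    using eventually_happens'[OF trivial_limit_at_right_real] eventually_conj by blast
  then have "persuasion_profile \<mu> uR (mix e (pure_strat f) (pure_strat g)) (pure_strat \<beta>)"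
    by (simp add: persuasion_profile_def msg_strat_mix msg_strat_pure_strat act_strat_pure_strat)
  moreover have "U \<mu> uS (pure_strat f) (pure_strat \<beta>) < U \<mu> uS (mix e (pure_strat f) (pure_strat g)) (pure_strat \<beta>)"
  proof -
    have "U \<mu> uS (pure_strat g) (pure_strat \<beta>) - U \<mu> uS (pure_strat f) (pure_strat \<beta>)
        = (\<Sum>v\<in>UNIV. if v = w then \<mu> w * (uS (\<beta> (f w')) w - uS (\<beta> (f w)) w) else 0)"
      unfolding U_pure_pure sum_subtractf[symmetric]
      by (rule sum.cong) (auto simp: g_def right_diff_distrib)
    also have "\<dots> > 0"
      using pos gain by simp
    finally show ?thesis
      using e by (simp add: U_mix algebra_simps)
  qed
  ultimately show ?thesis
    by blast
qed

lemma S_BR_pure_strat: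
  assumes "\<forall>w. 0 \<le> \<mu> w" and "\<forall>w m. u (\<beta> m) w \<le> u (\<beta> (f w)) w"
  shows "S_BR \<mu> u (pure_strat f) (pure_strat \<beta>)"
  unfolding S_BR_def
proof (intro allI impI)
  fix \<sigma> :: "'a \<Rightarrow> 'b \<Rightarrow> real"
  assume "msg_strat \<sigma>"
  then have "(\<Sum>m\<in>UNIV. \<sigma> w m * u (\<beta> m) w) \<le> u (\<beta> (f w)) w" for w
    using assms(2) by (intro is_dist_sum_le) (auto simp: msg_strat_def)
  then have "(\<Sum>w\<in>UNIV. \<mu> w * (\<Sum>m\<in>UNIV. \<sigma> w m * u (\<beta> m) w)) \<le> (\<Sum>w\<in>UNIV. \<mu> w * u (\<beta> (f w)) w)"
    using assms(1) by (intro sum_mono mult_left_mono) auto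
  then show "U \<mu> u \<sigma> (pure_strat \<beta>) \<le> U \<mu> u (pure_strat f) (pure_strat \<beta>)"
    by (simp only: U_pure_act[of \<mu> u \<sigma>] U_pure_pure)
qed

lemma U_le_sum_Max:
  assumes "\<forall>w. 0 \<le> \<mu> w" and "msg_strat \<sigma>" and "act_strat \<rho>"
  shows "U \<mu> u \<sigma> \<rho> \<le> (\<Sum>w\<in>UNIV. \<mu> w * Max (range (\<lambda>a. u a w)))"
proof -
  have "(\<Sum>a\<in>UNIV. \<rho> m a * u a w) \<le> Max (range (\<lambda>a. u a w))" for m w
    using assms(3) by (rule_tac is_dist_sum_le) (auto simp: act_strat_def)
  then have "(\<Sum>m\<in>UNIV. \<sigma> w m * (\<Sum>a\<in>UNIV. \<rho> m a * u a w)) \<le> Max (range (\<lambda>a. u a w))" for w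
    using assms(2) by (rule_tac is_dist_sum_le) (auto simp: msg_strat_def)
  then show ?thesis
    unfolding U_eq_sum_states using assms(1) by (intro sum_mono mult_left_mono) auto
qed

lemma bdd_above_U:
  fixes P :: "('w::finite \<Rightarrow> 'm::finite \<Rightarrow> real) \<Rightarrow> ('m \<Rightarrow> 'a::finite \<Rightarrow> real) \<Rightarrow> bool"
  assumes "\<forall>w. 0 \<le> \<mu> w"
  shows "bdd_above {U \<mu> u \<sigma> \<rho> |\<sigma> \<rho>. msg_strat \<sigma> \<and> act_strat \<rho> \<and> P \<sigma> \<rho>}"
proof (rule bdd_aboveI)
  fix x
  assume "x \<in> {U \<mu> u \<sigma> \<rho> |\<sigma> \<rho>. msg_strat \<sigma> \<and> act_strat \<rho> \<and> P \<sigma> \<rho>}"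
  then obtain \<sigma> :: "'w \<Rightarrow> 'm \<Rightarrow> real" and \<rho> where "x = U \<mu> u \<sigma> \<rho>" and "msg_strat \<sigma>" and "act_strat \<rho>"
    by blast
  then show "x \<le> (\<Sum>w\<in>UNIV. \<mu> w * Max (range (\<lambda>a. u a w)))"
    using U_le_sum_Max[OF assms] by simp
qed

lemma U_le_persuasion_payoff:
  fixes \<sigma> :: "'w::finite \<Rightarrow> 'm::finite \<Rightarrow> real"
  assumes "\<forall>w. 0 \<le> \<mu> w" and "persuasion_profile \<mu> uR \<sigma> \<rho>"
  shows "U \<mu> uS \<sigma> \<rho> \<le> persuasion_payoff TYPE('m) \<mu> uS uR"
proof -
  have "bdd_above {U \<mu> uS \<sigma> \<rho> |(\<sigma> :: 'w \<Rightarrow> 'm \<Rightarrow> real) \<rho>. persuasion_profile \<mu> uR \<sigma> \<rho>}"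
    unfolding persuasion_profile_def by (rule bdd_above_U[OF assms(1)])
  then show ?thesis
    unfolding persuasion_payoff_def using assms(2) by (intro cSup_upper) auto
qed

lemma U_le_partitional_cheap_talk_payoff:
  fixes \<sigma> :: "'w::finite \<Rightarrow> 'm::finite \<Rightarrow> real"
  assumes "\<forall>w. 0 \<le> \<mu> w" and "cheap_talk_eq \<mu> uS uR \<sigma> \<rho>" and "partitional \<sigma>"
  shows "U \<mu> uS \<sigma> \<rho> \<le> partitional_cheap_talk_payoff TYPE('m) \<mu> uS uR"
proof -
  have "bdd_above {U \<mu> uS \<sigma> \<rho> |(\<sigma> :: 'w \<Rightarrow> 'm \<Rightarrow> real) \<rho>. cheap_talk_eq \<mu> uS uR \<sigma> \<rho> \<and> partitional \<sigma>}"
    unfolding cheap_talk_eq_def conj_assoc by (rule bdd_above_U[OF assms(1)])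
  then show ?thesis
    unfolding partitional_cheap_talk_payoff_def using assms(2,3) by (intro cSup_upper) auto
qed

lemma cheap_talk_payoff_le_persuasion_payoff:
  fixes \<sigma> :: "'w::finite \<Rightarrow> 'm::finite \<Rightarrow> real"
  assumes "\<forall>w. 0 \<le> \<mu> w" and "cheap_talk_eq \<mu> uS uR \<sigma> \<rho>"
  shows "cheap_talk_payoff TYPE('m) \<mu> uS uR \<le> persuasion_payoff TYPE('m) \<mu> uS uR"
  unfolding cheap_talk_payoff_def
proof (rule cSup_least)
  show "{U \<mu> uS \<sigma> \<rho> |(\<sigma> :: 'w \<Rightarrow> 'm \<Rightarrow> real) \<rho>. cheap_talk_eq \<mu> uS uR \<sigma> \<rho>} \<noteq> {}"
    using assms(2) by blast
next
  fix x
  assume "x \<in> {U \<mu> uS \<sigma> \<rho> |(\<sigma> :: 'w \<Rightarrow> 'm \<Rightarrow> real) \<rho>. cheap_talk_eq \<mu> uS uR \<sigma> \<rho>}"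
  then obtain \<sigma> :: "'w \<Rightarrow> 'm \<Rightarrow> real" and \<rho> where "x = U \<mu> uS \<sigma> \<rho>" and "cheap_talk_eq \<mu> uS uR \<sigma> \<rho>"
    by blast
  then show "x \<le> persuasion_payoff TYPE('m) \<mu> uS uR"
    using U_le_persuasion_payoff[OF assms(1), of uR \<sigma> \<rho> uS]
    by (simp add: cheap_talk_eq_def persuasion_profile_def)
qed

lemma generic_partitional_persuasion_payoff:
  fixes \<mu> :: "'w::finite \<Rightarrow> real"
  assumes gen: "receiver_generic \<mu> uR"
  obtains f :: "'w \<Rightarrow> 'm::finite"
  where "partitional_persuasion_payoff TYPE('m) \<mu> uS uR
           = U \<mu> uS (pure_strat f) (pure_strat (partition_response \<mu> uR f))"
proof -
  let ?val = "\<lambda>f :: 'w \<Rightarrow> 'm. U \<mu> uS (pure_strat f) (pure_strat (partition_response \<mu> uR f))"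
  have "{U \<mu> uS \<sigma> \<rho> |(\<sigma> :: 'w \<Rightarrow> 'm \<Rightarrow> real) \<rho>. persuasion_profile \<mu> uR \<sigma> \<rho> \<and> partitional \<sigma>}
        = range ?val" (is "?P = _")
  proof
    show "?P \<subseteq> range ?val"
    proof
      fix x
      assume "x \<in> ?P"
      then obtain \<sigma> :: "'w \<Rightarrow> 'm \<Rightarrow> real" and \<rho> where x: "x = U \<mu> uS \<sigma> \<rho>"
        and pp: "persuasion_profile \<mu> uR \<sigma> \<rho>" and "partitional \<sigma>"
        by blast
      then obtain f where "\<sigma> = pure_strat f"
        using partitional_imp_pure_strat by (auto simp: persuasion_profile_def)
      then show "x \<in> range ?val"
        using x pp generic_persuasion_value[OF gen _ allI[OF allI[OF partition_response_best]]] by auto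
    qed
  next
    have "persuasion_profile \<mu> uR (pure_strat f) (pure_strat (partition_response \<mu> uR f))" for f :: "'w \<Rightarrow> 'm"
      by (simp add: persuasion_profile_def msg_strat_pure_strat act_strat_pure_strat
          R_BR_pure_strat partition_response_best)
    then show "range ?val \<subseteq> ?P"
      using partitional_pure_strat by blast
  qed
  then have "partitional_persuasion_payoff TYPE('m) \<mu> uS uR \<in> range ?val"
    by (simp add: partitional_persuasion_payoff_def cSup_eq_Max)
  then show thesis
    using that by blast
qed

lemma optimal_persuasion_S_BR:
  fixes f :: "'w::finite \<Rightarrow> 'm::finite"
  assumes pos: "\<forall>w. 0 < \<mu> w" and gen: "receiver_generic \<mu> uR"
    and br: "\<forall>m a. message_payoff \<mu> uR (pure_strat f) m a \<le> message_payoff \<mu> uR (pure_strat f) m (\<beta> m)"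
    and used: "\<forall>m. \<exists>w. \<beta> m = \<beta> (f w)"
    and opt: "\<forall>(\<sigma> :: 'w \<Rightarrow> 'm \<Rightarrow> real) \<rho>. persuasion_profile \<mu> uR \<sigma> \<rho> \<longrightarrow>
                U \<mu> uS \<sigma> \<rho> \<le> U \<mu> uS (pure_strat f) (pure_strat \<beta>)"
  shows "S_BR \<mu> uS (pure_strat f) (pure_strat \<beta>)"
proof (rule S_BR_pure_strat)
  show "\<forall>w. 0 \<le> \<mu> w"
    using pos by (simp add: less_imp_le)
  show "\<forall>w m. uS (\<beta> m) w \<le> uS (\<beta> (f w)) w"
  proof (intro allI)
    fix w m
    obtain w' where "\<beta> m = \<beta> (f w')"
      using used by blast
    then show "uS (\<beta> m) w \<le> uS (\<beta> (f w)) w"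
      using profitable_persuasion_deviation[OF pos gen br, of uS w w'] opt by force
  qed
qed

theorem generic_committed_values_randomization:
  fixes \<mu> :: "'w::finite \<Rightarrow> real" and uS uR :: "'a::finite \<Rightarrow> 'w \<Rightarrow> real"
  assumes pos: "\<forall>w. 0 < \<mu> w" and gen: "receiver_generic \<mu> uR"
    and "cheap_talk_values_randomization TYPE('m::finite) \<mu> uS uR"
  shows "committed_values_randomization TYPE('m) \<mu> uS uR"
proof (rule ccontr)
  assume "\<not> committed_values_randomization TYPE('m) \<mu> uS uR"
  then have no_gain: "persuasion_payoff TYPE('m) \<mu> uS uR \<le> partitional_persuasion_payoff TYPE('m) \<mu> uS uR"
    by (simp add: committed_values_randomization_def)
  have nonneg: "\<forall>w. 0 \<le> \<mu> w"
    using pos by (simp add: less_imp_le)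
  obtain f :: "'w \<Rightarrow> 'm" where f: "partitional_persuasion_payoff TYPE('m) \<mu> uS uR
      = U \<mu> uS (pure_strat f) (pure_strat (partition_response \<mu> uR f))"
    using generic_partitional_persuasion_payoff[OF gen] by blast
  have "U \<mu> uS \<sigma> \<rho> \<le> U \<mu> uS (pure_strat f) (pure_strat (partition_response \<mu> uR f))"
    if "persuasion_profile \<mu> uR \<sigma> \<rho>" for \<sigma> :: "'w \<Rightarrow> 'm \<Rightarrow> real" and \<rho>
    using order_trans[OF U_le_persuasion_payoff[OF nonneg that] no_gain] f by simp
  then have "S_BR \<mu> uS (pure_strat f) (pure_strat (partition_response \<mu> uR f))"
    using optimal_persuasion_S_BR[OF pos gen allI[OF allI[OF partition_response_best]]
        allI[OF partition_response_used]] by blast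
  then have eq: "cheap_talk_eq \<mu> uS uR (pure_strat f) (pure_strat (partition_response \<mu> uR f))"
    by (simp add: cheap_talk_eq_def msg_strat_pure_strat act_strat_pure_strat
        R_BR_pure_strat partition_response_best)
  have "cheap_talk_payoff TYPE('m) \<mu> uS uR \<le> persuasion_payoff TYPE('m) \<mu> uS uR"
    by (rule cheap_talk_payoff_le_persuasion_payoff[OF nonneg eq])
  also have "\<dots> \<le> U \<mu> uS (pure_strat f) (pure_strat (partition_response \<mu> uR f))"
    using no_gain f by simp
  also have "\<dots> \<le> partitional_cheap_talk_payoff TYPE('m) \<mu> uS uR"
    by (rule U_le_partitional_cheap_talk_payoff[OF nonneg eq partitional_pure_strat])
  finally show False
    using \<open>cheap_talk_values_randomization TYPE('m) \<mu> uS uR\<close>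
    by (simp add: cheap_talk_values_randomization_def)
qed

lemma negligible_not_receiver_generic:
  fixes \<mu> :: "'w::finite \<Rightarrow> real"
  assumes pos: "\<forall>w. 0 < \<mu> w"
  shows "negligible {x :: real ^ (bool \<times> 'a::finite \<times> 'w). \<not> receiver_generic \<mu> (env_uR x)}"
proof -
  define v :: "'w set \<Rightarrow> 'a \<Rightarrow> 'a \<Rightarrow> real ^ (bool \<times> 'a \<times> 'w)" where
    "v C a a' = (\<Sum>w\<in>C. \<mu> w *\<^sub>R (axis (False, a, w) 1 - axis (False, a', w) 1))" for C a a'
  have v_inner: "v C a a' \<bullet> x = (\<Sum>w\<in>C. \<mu> w * env_uR x a w) - (\<Sum>w\<in>C. \<mu> w * env_uR x a' w)" for C a a' x
    by (simp add: v_def inner_sum_left inner_diff_left inner_axis' env_uR_def right_diff_distrib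
        sum_subtractf)
  have "negligible {x. v C a a' \<bullet> x = 0}" if "C \<noteq> {}" and "a \<noteq> a'" for C a a'
  proof (rule negligible_hyperplane)
    obtain w0 where "w0 \<in> C"
      using \<open>C \<noteq> {}\<close> by blast
    have "v C a a' \<bullet> axis (False, a, w0) 1 = (\<Sum>w\<in>C. if w = w0 then \<mu> w else 0)"
      unfolding v_inner using \<open>a \<noteq> a'\<close> by (simp add: env_uR_def axis_def if_distrib cong: if_cong)
    also have "\<dots> = \<mu> w0"
      using \<open>w0 \<in> C\<close> by (simp add: sum.delta)
    finally show "v C a a' \<noteq> 0 \<or> 0 \<noteq> 0"
      using pos by (metis inner_zero_left less_irrefl)
  qed
  then have "negligible (\<Union>((\<lambda>(C, a, a'). {x. v C a a' \<bullet> x = 0}) ` {(C, a, a'). C \<noteq> {} \<and> a \<noteq> a'}))"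
    by (intro negligible_Union) auto
  moreover have "{x. \<not> receiver_generic \<mu> (env_uR x)}
      \<subseteq> \<Union>((\<lambda>(C, a, a'). {x. v C a a' \<bullet> x = 0}) ` {(C, a, a'). C \<noteq> {} \<and> a \<noteq> a'})"
    by (auto simp: receiver_generic_def v_inner)
  ultimately show ?thesis
    by (rule negligible_subset)
qed

lemma unit_cube_eq_cbox: "(unit_cube :: (real ^ 'n::finite) set) = cbox 0 1"
  by (auto simp: mem_box_cart unit_cube_def)

lemma emeasure_unit_cube: "emeasure lebesgue (unit_cube :: (real ^ 'n::finite) set) = 1"
proof -
  have "(1 :: real ^ 'n) \<bullet> b = 1" if "b \<in> Basis" for b
    using that by (auto simp: Basis_vec_def inner_axis)
  then have "emeasure lborel (cbox (0 :: real ^ 'n) 1) = 1"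
    by (simp add: emeasure_lborel_cbox_eq)
  then show ?thesis
    by (simp add: unit_cube_eq_cbox emeasure_completion)
qed

lemma unit_cube_Diff_negligible:
  assumes "negligible N"
  shows "unit_cube - N \<in> sets lebesgue" and "emeasure lebesgue (unit_cube - N) = 1"
proof -
  have null: "N \<in> null_sets lebesgue" and cube: "unit_cube \<in> sets lebesgue"
    using assms by (simp_all add: negligible_iff_null_sets unit_cube_eq_cbox)
  then show "unit_cube - N \<in> sets lebesgue"
    by auto
  show "emeasure lebesgue (unit_cube - N) = 1"
    using emeasure_Diff_null_set[OF null cube] by (simp add: emeasure_unit_cube)
qed

theorem corollary1:
  fixes \<mu> :: "'w::finite \<Rightarrow> real"
  assumes "\<forall>w. \<mu> w > 0"
    and "(\<Sum>w\<in>UNIV. \<mu> w) = 1"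
    and "CARD('m::finite) > max CARD('w) CARD('a::finite)"
  shows "\<exists>E :: (real ^ (bool \<times> 'a \<times> 'w)) set.
           E \<subseteq> unit_cube \<and> E \<in> sets lebesgue \<and> emeasure lebesgue E = 1 \<and>
           (\<forall>x\<in>E. cheap_talk_values_randomization TYPE('m) \<mu> (env_uS x) (env_uR x)
                 \<longrightarrow> committed_values_randomization TYPE('m) \<mu> (env_uS x) (env_uR x))"
proof -
  define N where "N = {x :: real ^ (bool \<times> 'a \<times> 'w). \<not> receiver_generic \<mu> (env_uR x)}"
  have "negligible N"
    unfolding N_def using assms(1) by (rule negligible_not_receiver_generic)
  then have "unit_cube - N \<in> sets lebesgue" and "emeasure lebesgue (unit_cube - N) = 1"
    by (rule unit_cube_Diff_negligible)+
  moreover have "committed_values_randomization TYPE('m) \<mu> (env_uS x) (env_uR x)"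
    if "x \<in> unit_cube - N" and "cheap_talk_values_randomization TYPE('m) \<mu> (env_uS x) (env_uR x)" for x
    using that by (intro generic_committed_values_randomization[OF assms(1)]) (simp_all add: N_def)
  ultimately show ?thesis
    by (intro exI[of _ "unit_cube - N"]) blast
qed

end
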